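(* Let $X>0$, $n\ge1$, let $a_0,a_1$ be $X$-periodic $\mathbb{C}^{n\times n}$-valued functions in $H^1_{\rm per}([0,X])$, and for $\sigma\in[0,2\pi)$ let $A_1=a_1+2i\sigma I$, $A_0=a_0-\sigma^2I+i\sigma a_1$, $K(\sigma,\lambda)=\partial_x(\partial_x^2-1)^{-1}A_1+(\partial_x^2-1)^{-1}(A_0+(1-\lambda)I)$ on $L^2_{\rm per}([0,X];\mathbb{C}^n)$. Let $D_\sigma(\lambda)={\det}_2(I+K(\sigma,\lambda))$ and $D_{\sigma,J}(\lambda)={\det}_2(I+P_JK(\sigma,\lambda)P_J|_{\mathcal{H}_J})$, where $P_J$ is the orthogonal projection onto $\mathcal{H}_J=\operatorname{span}\{e^{2\pi ikx/X}v:|k|\le J, v\in\mathbb{C}^n\}$. Then for each $R>0$ there exists $C=C(R)>0$ such that $|D_{\sigma,J}(\lambda)-D_\sigma(\lambda)|\le CJ^{-1/2}$ for all $J\in\mathbb{N}$, all $|\lambda|\le R$ and all $\sigma\in[0,2\pi)$.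
   Context: The multipliers act diagonally on Fourier modes. ${\det}_2$ is the 2-modified Fredholm determinant: ${\det}_2(I-A)=\det(I-A)e^{\operatorname{tr}A}$ in finite dimension, and for Hilbert–Schmidt $A$ the limit of ${\det}_2$ of finite-dimensional compressions along increasing subspaces with dense union; ${\det}_2(I+K)$ means ${\det}_2(I-(-K))$. *)

theory Defs
  imports "HOL-Analysis.Analysis"
begin

definition fcoef :: "real \<Rightarrow> (real \<Rightarrow> complex) \<Rightarrow> int \<Rightarrow> complex" where
  "fcoef X f k = integral {0..X} (\<lambda>x. f x * cis (- 2 * pi * real_of_int k * x / X)) / complex_of_real X"

text \<open>H^1_per([0,X]) for scalar functions: X-periodic, in L^2([0,X]) (measurable with
  square-integrable modulus; on a bounded interval this gives absolute integrability), and
  sum_k (1+k^2) |f^_k|^2 < infinity.\<close>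
definition H1per_scalar :: "real \<Rightarrow> (real \<Rightarrow> complex) \<Rightarrow> bool" where
  "H1per_scalar X f \<longleftrightarrow>
     (\<forall>x. f (x + X) = f x) \<and>
     f absolutely_integrable_on {0..X} \<and>
     (\<lambda>x. (cmod (f x))^2) integrable_on {0..X} \<and>
     (\<lambda>k::int. (1 + (real_of_int k)^2) * (cmod (fcoef X f k))^2) summable_on UNIV"

definition H1per :: "real \<Rightarrow> (real \<Rightarrow> complex^'n^'n) \<Rightarrow> bool" where
  "H1per X a \<longleftrightarrow> (\<forall>i j. H1per_scalar X (\<lambda>x. a x $ i $ j))"

definition det_fin :: "'i set \<Rightarrow> ('i \<Rightarrow> 'i \<Rightarrow> complex) \<Rightarrow> complex" where
  "det_fin F B = (\<Sum>p | p permutes F. of_int (sign p) * (\<Prod>i\<in>F. B i (p i)))"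

text \<open>2-modified determinant det_2(I+M) = det(I+M) e^{-tr M} of the compression of M to
  the coordinate subspace spanned by the (orthonormal) basis vectors indexed by F.\<close>
definition det2_fin :: "'i set \<Rightarrow> ('i \<Rightarrow> 'i \<Rightarrow> complex) \<Rightarrow> complex" where
  "det2_fin F M = det_fin F (\<lambda>i j. (if i = j then 1 else 0) + M i j) * exp (- (\<Sum>i\<in>F. M i i))"

text \<open>det_2(I+M) for an operator with matrix M in an orthonormal basis indexed by S:
  the limit of det_2 of compressions along increasing finite coordinate subspaces with dense union.\<close>
definition det2 :: "'i set \<Rightarrow> ('i \<Rightarrow> 'i \<Rightarrow> complex) \<Rightarrow> complex" where
  "det2 S M = (THE L. \<forall>F::nat \<Rightarrow> 'i set.
      (\<forall>j. finite (F j) \<and> F j \<subseteq> S) \<and> incseq F \<and> (\<Union>j. F j) = S \<longrightarrow>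
      (\<lambda>j. det2_fin (F j) M) \<longlonglongrightarrow> L)"

definition freq :: "real \<Rightarrow> int \<Rightarrow> real" where
  "freq X k = 2 * pi * real_of_int k / X"

text \<open>Matrix of K(sigma,lambda) = d_x (d_x^2-1)^{-1} A_1 + (d_x^2-1)^{-1}(A_0 + (1-lambda) I)
  in the orthonormal basis e_k v_i = X^{-1/2} e^{2 pi i k x/X} v_i of L^2_per([0,X];C^n),
  indexed by (k,i).  The multipliers act diagonally: d_x -> i xi_k, (d_x^2-1)^{-1} -> -1/(1+xi_k^2);
  multiplication by a matrix function a has entries <e_k v_i, a e_m v_j> = (a_ij)^_(k-m).\<close>
definition Kmat :: "real \<Rightarrow> (real \<Rightarrow> complex^'n^'n) \<Rightarrow> (real \<Rightarrow> complex^'n^'n) \<Rightarrow> real \<Rightarrow> complex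
                    \<Rightarrow> (int \<times> 'n) \<Rightarrow> (int \<times> 'n) \<Rightarrow> complex" where
  "Kmat X a0 a1 \<sigma> lam = (\<lambda>(k, i) (m, j).
     let xk = complex_of_real (freq X k);
         dl = (if k = m \<and> i = j then 1 else 0);
         A1 = fcoef X (\<lambda>x. a1 x $ i $ j) (k - m) + 2 * \<i> * complex_of_real \<sigma> * dl;
         A0 = fcoef X (\<lambda>x. a0 x $ i $ j) (k - m) - (complex_of_real \<sigma>)^2 * dl
              + \<i> * complex_of_real \<sigma> * fcoef X (\<lambda>x. a1 x $ i $ j) (k - m)
     in - ((\<i> * xk) / (1 + xk\<^sup>2)) * A1 - (1 / (1 + xk\<^sup>2)) * (A0 + (1 - lam) * dl))"

text \<open>Index set of H_J = span{e^{2 pi i k x/X} v : |k| <= J, v in C^n}.\<close>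
definition trunc_idx :: "nat \<Rightarrow> (int \<times> 'n) set" where
  "trunc_idx J = {(k, i). \<bar>k\<bar> \<le> int J}"

end

theory Submission
  imports Defs "Jordan_Normal_Form.Determinant" "HOL-Complex_Analysis.Cauchy_Integral_Formula"
begin

text \<open>In the Fourier basis, indexed by \<open>(k, i)\<close>, the squared entries of \<open>K(\<sigma>,\<lambda>)\<close> are bounded by
  \<open>C\<^sub>0 (g\<^sub>i\<^sub>j(k - m) + \<delta>\<^sub>k\<^sub>m \<delta>\<^sub>i\<^sub>j) / (1 + k\<^sup>2)\<close>, uniformly in \<open>|\<lambda>| \<le> R\<close> and \<open>\<sigma>\<close>, where \<open>g\<^sub>i\<^sub>j(l)\<close> collects the
  squared Fourier coefficients of \<open>a\<^sub>0, a\<^sub>1\<close>, so that \<open>\<Sum>\<^sub>l (1 + l\<^sup>2) g\<^sub>i\<^sub>j(l) < \<infinity>\<close> by the \<open>H\<^sup>1\<close> hypothesis.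
  Consequently all compressions of \<open>K\<close> have uniformly bounded Hilbert--Schmidt norm, and the part of
  \<open>K\<close> outside the block \<open>|k|, |m| \<le> J\<close> has squared Hilbert--Schmidt norm \<open>O(1/J)\<close>: rows with
  \<open>|k| > J\<close> are summed against \<open>1/k\<^sup>2\<close>, and an entry of a row inside the block with \<open>|m| > J\<close> gains the
  factor \<open>(1 + (k - m)\<^sup>2) / (J + 1)\<^sup>2\<close> by Peetre's inequality.

  Carleman's inequality \<open>|det\<^sub>2(I + A)| \<le> exp (\<parallel>A\<parallel>\<^sub>2\<^sup>2 / 2)\<close>, a consequence of Hadamard's inequality,
  combined with Cauchy's estimate makes \<open>det\<^sub>2\<close> locally Lipschitz for the Hilbert--Schmidt norm. So
  compressions to any two finite sets containing the block differ by \<open>O(J\<^sup>-\<^sup>1\<^sup>/\<^sup>2)\<close>; this Cauchy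
  property yields both the existence of \<open>det\<^sub>2\<close> and the error bound.\<close>

no_notation Matrix.vec_index (infixl \<open>$\<close> 100)

section \<open>Hadamard's inequality\<close>

definition inner_fin :: "nat \<Rightarrow> (nat \<Rightarrow> complex) \<Rightarrow> (nat \<Rightarrow> complex) \<Rightarrow> complex" where
  "inner_fin n u v = (\<Sum>r<n. cnj (u r) * v r)"

definition norm2_fin :: "nat \<Rightarrow> (nat \<Rightarrow> complex) \<Rightarrow> real" where
  "norm2_fin n u = (\<Sum>r<n. (cmod (u r))^2)"

definition col_fun :: "complex mat \<Rightarrow> nat \<Rightarrow> nat \<Rightarrow> complex" where
  "col_fun A j = (\<lambda>r. A $$ (r, j))"

lemma inner_fin_self: "inner_fin n u u = complex_of_real (norm2_fin n u)"
proof -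
  have "cnj z * z = complex_of_real ((cmod z)^2)" for z
    by (metis complex_norm_square mult.commute)
  then show ?thesis unfolding inner_fin_def norm2_fin_def of_real_sum by simp
qed

lemma inner_fin_commute: "inner_fin n v u = cnj (inner_fin n u v)"
  unfolding inner_fin_def by (simp add: cnj_sum mult.commute)

lemma norm2_fin_nonneg: "norm2_fin n u \<ge> 0"
  unfolding norm2_fin_def by (simp add: sum_nonneg)

lemma inner_fin_eq_0_if_norm2_fin_eq_0:
  assumes "norm2_fin n u = 0" shows "inner_fin n u v = 0"
proof -
  have "u r = 0" if "r < n" for r
    using assms that unfolding norm2_fin_def by (subst (asm) sum_nonneg_eq_0_iff) auto
  then show ?thesis unfolding inner_fin_def by (auto intro!: sum.neutral)
qed

lemma inner_fin_diff_sum_right: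
  "inner_fin n u (\<lambda>r. v r - (\<Sum>k\<in>K. c k * w k r)) = inner_fin n u v - (\<Sum>k\<in>K. c k * inner_fin n u (w k))"
  unfolding inner_fin_def
  by (simp add: algebra_simps sum_subtractf sum_distrib_left sum.swap[of _ K] mult.left_commute)

lemma inner_fin_sum_left:
  "inner_fin n (\<lambda>r. \<Sum>k\<in>K. c k * w k r) v = (\<Sum>k\<in>K. cnj (c k) * inner_fin n (w k) v)"
  unfolding inner_fin_def
  by (simp add: cnj_sum sum_distrib_left sum_distrib_right sum.swap[of _ K] mult.assoc mult.left_commute)

lemma norm2_fin_add_orthogonal:
  assumes "inner_fin n p u = 0"
  shows "norm2_fin n (\<lambda>r. u r + p r) = norm2_fin n u + norm2_fin n p"
proof -
  have "complex_of_real (norm2_fin n (\<lambda>r. u r + p r)) = inner_fin n (\<lambda>r. u r + p r) (\<lambda>r. u r + p r)"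
    by (simp add: inner_fin_self)
  also have "\<dots> = inner_fin n u u + inner_fin n u p + inner_fin n p u + inner_fin n p p"
    unfolding inner_fin_def by (simp add: algebra_simps sum.distrib)
  also have "\<dots> = complex_of_real (norm2_fin n u + norm2_fin n p)"
    using assms inner_fin_commute[of n u p] by (simp add: inner_fin_self)
  finally show ?thesis by (simp only: of_real_eq_iff)
qed

lemma inner_fin_cong:
  "(\<And>r. r < n \<Longrightarrow> u r = u' r) \<Longrightarrow> (\<And>r. r < n \<Longrightarrow> v r = v' r) \<Longrightarrow> inner_fin n u v = inner_fin n u' v'"
  unfolding inner_fin_def by (intro sum.cong) auto

lemma norm2_fin_cong: "(\<And>r. r < n \<Longrightarrow> u r = u' r) \<Longrightarrow> norm2_fin n u = norm2_fin n u'"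
  unfolding norm2_fin_def by (intro sum.cong) auto

lemma index_mult_mat_sum:
  assumes "A \<in> carrier_mat n n" "B \<in> carrier_mat n n" "i < n" "j < n"
  shows "(A * B) $$ (i, j) = (\<Sum>k<n. A $$ (i, k) * B $$ (k, j))"
  using assms by (simp add: scalar_prod_def atLeast0LessThan)

lemma det_cnj_mat:
  assumes "A \<in> carrier_mat n n"
  shows "Determinant.det (Matrix.mat n n (\<lambda>(i, j). cnj (A $$ (i, j)))) = cnj (Determinant.det A)"
proof -
  have "Determinant.det (Matrix.mat n n (\<lambda>(i, j). cnj (A $$ (i, j)))) =
    (\<Sum>p | p permutes {0..<n}. of_int (sign p) * (\<Prod>i = 0..<n. cnj (A $$ (i, p i))))"
    by (subst det_def'[of _ n]) (auto intro!: sum.cong prod.cong simp: permutes_in_image)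
  then show ?thesis using assms by (simp add: det_def'[of _ n] cnj_sum cnj_prod)
qed

text \<open>The coefficient of a zero column is \<open>0\<close> (division by zero), so linearly dependent columns
  need no special treatment.\<close>

lemma gram_schmidt_column_step:
  fixes Q :: "complex mat"
  assumes Q: "Q \<in> carrier_mat n n" and m: "m < n"
    and orth: "\<And>i j. i < m \<Longrightarrow> j < m \<Longrightarrow> i \<noteq> j \<Longrightarrow> inner_fin n (col_fun Q i) (col_fun Q j) = 0"
  shows "\<exists>V \<in> carrier_mat n n. Determinant.det V = 1 \<and>
     (\<forall>j r. j < n \<longrightarrow> j \<noteq> m \<longrightarrow> r < n \<longrightarrow> (Q * V) $$ (r, j) = Q $$ (r, j)) \<and>
     (\<forall>i<m. inner_fin n (col_fun Q i) (col_fun (Q * V) m) = 0) \<and>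
     norm2_fin n (col_fun (Q * V) m) \<le> norm2_fin n (col_fun Q m)"
proof -
  define \<mu> where "\<mu> i = inner_fin n (col_fun Q i) (col_fun Q m) / complex_of_real (norm2_fin n (col_fun Q i))" for i
  define V where "V = Matrix.mat n n (\<lambda>(r, c). if r = c then 1 else if c = m \<and> r < m then - \<mu> r else 0)"
  have V: "V \<in> carrier_mat n n" unfolding V_def by simp
  have "upper_triangular V" unfolding V_def by (auto simp: upper_triangular_def)
  then have "Determinant.det V = prod_list (diag_mat V)" using V by (rule det_upper_triangular)
  also have "\<dots> = 1" unfolding prod_list_diag_prod using V by (simp add: V_def)
  finally have detV: "Determinant.det V = 1" .
  have col_other: "(Q * V) $$ (r, j) = Q $$ (r, j)" if "j < n" "j \<noteq> m" "r < n" for j r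
  proof -
    have "(Q * V) $$ (r, j) = (\<Sum>k<n. if k = j then Q $$ (r, j) else 0)"
      unfolding index_mult_mat_sum[OF Q V that(3,1)] using that by (intro sum.cong) (auto simp: V_def)
    then show ?thesis using that by simp
  qed
  have col_m: "col_fun (Q * V) m r = col_fun Q m r - (\<Sum>k\<in>{..<m}. \<mu> k * col_fun Q k r)" if "r < n" for r
  proof -
    have "(Q * V) $$ (r, m) = (\<Sum>k<n. (if k = m then Q $$ (r, m) else 0) + (if k < m then - (\<mu> k * Q $$ (r, k)) else 0))"
      unfolding index_mult_mat_sum[OF Q V that m] using that m by (intro sum.cong) (auto simp: V_def)
    also have "\<dots> = Q $$ (r, m) + (\<Sum>k\<in>{..<n} \<inter> {k. k < m}. - (\<mu> k * Q $$ (r, k)))"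
      using m by (simp add: sum.distrib sum.If_cases)
    also have "{..<n} \<inter> {k. k < m} = {..<m}" using m by auto
    finally show ?thesis by (simp add: col_fun_def sum_negf)
  qed
  have orth_m: "inner_fin n (col_fun Q i) (col_fun (Q * V) m) = 0" if i: "i < m" for i
  proof -
    have "inner_fin n (col_fun Q i) (col_fun (Q * V) m)
        = inner_fin n (col_fun Q i) (col_fun Q m) - (\<Sum>k\<in>{..<m}. \<mu> k * inner_fin n (col_fun Q i) (col_fun Q k))"
      by (subst inner_fin_diff_sum_right[symmetric]) (rule inner_fin_cong, simp_all add: col_m)
    also have "(\<Sum>k\<in>{..<m}. \<mu> k * inner_fin n (col_fun Q i) (col_fun Q k)) = \<mu> i * inner_fin n (col_fun Q i) (col_fun Q i)"
      using i by (subst sum.remove[of _ i]) (auto intro!: sum.neutral simp: orth)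
    finally show ?thesis
      by (cases "norm2_fin n (col_fun Q i) = 0") (simp_all add: \<mu>_def inner_fin_self inner_fin_eq_0_if_norm2_fin_eq_0)
  qed
  define p where "p = (\<lambda>r. \<Sum>k\<in>{..<m}. \<mu> k * col_fun Q k r)"
  have "inner_fin n p (col_fun (Q * V) m) = 0"
    unfolding p_def inner_fin_sum_left by (auto intro!: sum.neutral simp: orth_m)
  then have "norm2_fin n (\<lambda>r. col_fun (Q * V) m r + p r) = norm2_fin n (col_fun (Q * V) m) + norm2_fin n p"
    by (rule norm2_fin_add_orthogonal)
  moreover have "norm2_fin n (\<lambda>r. col_fun (Q * V) m r + p r) = norm2_fin n (col_fun Q m)"
    by (intro norm2_fin_cong) (simp add: col_m p_def)
  ultimately have "norm2_fin n (col_fun (Q * V) m) \<le> norm2_fin n (col_fun Q m)"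
    using norm2_fin_nonneg[of n p] by linarith
  then show ?thesis using V detV col_other orth_m by blast
qed

lemma gram_schmidt_unimodular:
  fixes A :: "complex mat"
  assumes A: "A \<in> carrier_mat n n" and "m \<le> n"
  shows "\<exists>U \<in> carrier_mat n n. Determinant.det U = 1 \<and>
     (\<forall>i j. i < m \<longrightarrow> j < m \<longrightarrow> i \<noteq> j \<longrightarrow> inner_fin n (col_fun (A * U) i) (col_fun (A * U) j) = 0) \<and>
     (\<forall>j<n. norm2_fin n (col_fun (A * U) j) \<le> norm2_fin n (col_fun A j)) \<and>
     (\<forall>j r. m \<le> j \<longrightarrow> j < n \<longrightarrow> r < n \<longrightarrow> (A * U) $$ (r, j) = A $$ (r, j))"
  using \<open>m \<le> n\<close>
proof (induction m)
  case 0
  show ?case by (rule bexI[of _ "1\<^sub>m n"]) (use A in auto)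
next
  case (Suc m)
  then obtain U where U: "U \<in> carrier_mat n n" "Determinant.det U = 1"
    and orth: "\<And>i j. i < m \<Longrightarrow> j < m \<Longrightarrow> i \<noteq> j \<Longrightarrow> inner_fin n (col_fun (A * U) i) (col_fun (A * U) j) = 0"
    and norms: "\<And>j. j < n \<Longrightarrow> norm2_fin n (col_fun (A * U) j) \<le> norm2_fin n (col_fun A j)"
    and fixed: "\<And>j r. m \<le> j \<Longrightarrow> j < n \<Longrightarrow> r < n \<Longrightarrow> (A * U) $$ (r, j) = A $$ (r, j)"
    by auto
  have m: "m < n" using Suc by simp
  have AU: "A * U \<in> carrier_mat n n" using A U by simp
  obtain V where V: "V \<in> carrier_mat n n" "Determinant.det V = 1"
    and V_other: "\<And>j r. j < n \<Longrightarrow> j \<noteq> m \<Longrightarrow> r < n \<Longrightarrow> (A * U * V) $$ (r, j) = (A * U) $$ (r, j)"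
    and V_orth: "\<And>i. i < m \<Longrightarrow> inner_fin n (col_fun (A * U) i) (col_fun (A * U * V) m) = 0"
    and V_norm: "norm2_fin n (col_fun (A * U * V) m) \<le> norm2_fin n (col_fun (A * U) m)"
    using gram_schmidt_column_step[OF AU m orth] by blast
  have same_col: "col_fun (A * U * V) i r = col_fun (A * U) i r" if "i < m" "r < n" for i r
    using that m by (simp add: col_fun_def V_other)
  have same_inner:
    "inner_fin n (col_fun (A * U * V) i) w = inner_fin n (col_fun (A * U) i) w"
    "inner_fin n w (col_fun (A * U * V) i) = inner_fin n w (col_fun (A * U) i)" if "i < m" for i w
    using that by (auto intro: inner_fin_cong simp: same_col)
  have "inner_fin n (col_fun (A * U * V) i) (col_fun (A * U * V) j) = 0"
    if ij: "i < Suc m" "j < Suc m" "i \<noteq> j" for i j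
  proof -
    consider "i < m" "j < m" | "i < m" "j = m" | "i = m" "j < m" using ij unfolding less_Suc_eq by blast
    then show ?thesis
    proof cases
      case 1 then show ?thesis using orth ij by (simp add: same_inner)
    next
      case 2 then show ?thesis using V_orth by (simp add: same_inner)
    next
      case 3 then show ?thesis using V_orth[of j] inner_fin_commute by (metis complex_cnj_zero same_inner(2))
    qed
  qed
  moreover have "norm2_fin n (col_fun (A * U * V) j) \<le> norm2_fin n (col_fun A j)" if "j < n" for j
  proof (cases "j = m")
    case True
    have "norm2_fin n (col_fun (A * U) m) = norm2_fin n (col_fun A m)"
      using fixed m by (intro norm2_fin_cong) (simp add: col_fun_def)
    then show ?thesis using V_norm True by simp
  next
    case False
    have "norm2_fin n (col_fun (A * U * V) j) = norm2_fin n (col_fun (A * U) j)"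
      using V_other that False by (intro norm2_fin_cong) (simp add: col_fun_def)
    then show ?thesis using norms[OF that] by simp
  qed
  moreover have "(A * U * V) $$ (r, j) = A $$ (r, j)" if "Suc m \<le> j" "j < n" "r < n" for j r
    using that V_other fixed by simp
  moreover have "U * V \<in> carrier_mat n n" "Determinant.det (U * V) = 1"
    using U V by (simp_all add: det_mult)
  moreover have "A * U * V = A * (U * V)" using A U V by (simp add: assoc_mult_mat)
  ultimately show ?case by (metis (no_types, lifting))
qed

text \<open>After orthogonalisation, \<open>Q\<^sup>H Q\<close> is diagonal with the squared column norms on the diagonal.\<close>

theorem hadamard_inequality:
  fixes A :: "complex mat"
  assumes A: "A \<in> carrier_mat n n"
  shows "(cmod (Determinant.det A))^2 \<le> (\<Prod>j<n. norm2_fin n (col_fun A j))"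
proof -
  obtain U where U: "U \<in> carrier_mat n n" "Determinant.det U = 1"
    and orth: "\<And>i j. i < n \<Longrightarrow> j < n \<Longrightarrow> i \<noteq> j \<Longrightarrow> inner_fin n (col_fun (A * U) i) (col_fun (A * U) j) = 0"
    and norms: "\<And>j. j < n \<Longrightarrow> norm2_fin n (col_fun (A * U) j) \<le> norm2_fin n (col_fun A j)"
    using gram_schmidt_unimodular[OF A order.refl] by auto
  define Q where "Q = A * U"
  define QH where "QH = transpose_mat (Matrix.mat n n (\<lambda>(i, j). cnj (Q $$ (i, j))))"
  have Q: "Q \<in> carrier_mat n n" and QH: "QH \<in> carrier_mat n n"
    using A U by (simp_all add: Q_def QH_def)
  have Gram: "(QH * Q) $$ (i, j) = inner_fin n (col_fun Q i) (col_fun Q j)" if "i < n" "j < n" for i j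
    unfolding index_mult_mat_sum[OF QH Q that] inner_fin_def col_fun_def
    using that by (intro sum.cong) (auto simp: QH_def)
  have "upper_triangular (QH * Q)"
    using QH orth Gram unfolding Q_def by (intro upper_triangularI) auto
  then have "Determinant.det (QH * Q) = prod_list (diag_mat (QH * Q))"
    using QH Q by (intro det_upper_triangular) auto
  also have "\<dots> = (\<Prod>j = 0..<n. inner_fin n (col_fun Q j) (col_fun Q j))"
    unfolding prod_list_diag_prod using QH by (simp add: Gram)
  also have "\<dots> = (\<Prod>j<n. complex_of_real (norm2_fin n (col_fun Q j)))"
    by (simp add: inner_fin_self atLeast0LessThan)
  finally have "Determinant.det (QH * Q) = (\<Prod>j<n. complex_of_real (norm2_fin n (col_fun Q j)))" .
  moreover have "Determinant.det (QH * Q) = complex_of_real ((cmod (Determinant.det Q))^2)"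
  proof -
    have "Determinant.det QH = cnj (Determinant.det Q)"
      unfolding QH_def using det_cnj_mat[OF Q]
      by (subst Determinant.det_transpose[where n = n]) auto
    then have "Determinant.det (QH * Q) = cnj (Determinant.det Q) * Determinant.det Q"
      using QH Q by (simp add: det_mult)
    then show ?thesis by (metis complex_norm_square mult.commute of_real_power)
  qed
  ultimately have "(cmod (Determinant.det Q))^2 = (\<Prod>j<n. norm2_fin n (col_fun Q j))"
    by (metis of_real_eq_iff of_real_prod)
  also have "\<dots> \<le> (\<Prod>j<n. norm2_fin n (col_fun A j))"
    by (intro prod_mono) (auto simp: norm2_fin_nonneg norms Q_def)
  finally show ?thesis using A U by (simp add: Q_def det_mult)
qed

lemma det_fin_eq_det_mat:
  assumes e: "bij_betw e {0..<n} F"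
  shows "det_fin F B = Determinant.det (Matrix.mat n n (\<lambda>(i, j). B (e i) (e j)))"
proof -
  have inj: "inj_on e {0..<n}" using e by (rule bij_betw_imp_inj_on)
  define e' where "e' = inv_into {0..<n} e"
  have e': "bij_betw e' F {0..<n}" unfolding e'_def by (rule bij_betw_inv_into[OF e])
  have "Determinant.det (Matrix.mat n n (\<lambda>(i, j). B (e i) (e j))) =
     (\<Sum>q | q permutes {0..<n}. of_int (sign q) * (\<Prod>i = 0..<n. B (e i) (e (q i))))"
    by (subst det_def'[of _ n]) (auto intro!: sum.cong prod.cong simp: permutes_in_image)
  also have "\<dots> = det_fin F B"
    unfolding det_fin_def
  proof (rule sum.reindex_bij_witness[where j = "map_permutation {0..<n} e" and i = "map_permutation F e'"])
    fix q assume q: "q \<in> {q. q permutes {0..<n}}"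
    show "map_permutation F e' (map_permutation {0..<n} e q) = q"
      using q e inj by (auto intro!: map_permutation_compose_inv simp: e'_def)
    show "map_permutation {0..<n} e q \<in> {p. p permutes F}"
      using q e by (auto intro!: map_permutation_permutes)
    have "(\<Prod>i\<in>F. B i (map_permutation {0..<n} e q i)) =
          (\<Prod>i\<in>{0..<n}. B (e i) (map_permutation {0..<n} e q (e i)))"
      by (rule prod.reindex_bij_betw[OF e, symmetric])
    also have "\<dots> = (\<Prod>i = 0..<n. B (e i) (e (q i)))"
      using inj by (intro prod.cong refl) (simp add: map_permutation_apply)
    finally show "of_int (sign (map_permutation {0..<n} e q)) * (\<Prod>i\<in>F. B i (map_permutation {0..<n} e q i)) =
       of_int (sign q) * (\<Prod>i = 0..<n. B (e i) (e (q i)))"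
      using q inj by (simp add: sign_map_permutation)
  next
    fix p assume p: "p \<in> {p. p permutes F}"
    show "map_permutation {0..<n} e (map_permutation F e' p) = p"
      using p e' e by (auto intro!: map_permutation_compose_inv simp: e'_def bij_betw_inv_into_right)
    show "map_permutation F e' p \<in> {q. q permutes {0..<n}}"
      using p e' by (auto intro!: map_permutation_permutes)
  qed
  finally show ?thesis ..
qed

corollary hadamard_inequality_det_fin:
  assumes "finite F"
  shows "(cmod (det_fin F B))^2 \<le> (\<Prod>q\<in>F. \<Sum>p\<in>F. (cmod (B p q))^2)"
proof -
  obtain e where e: "bij_betw e {0..<card F} F" using ex_bij_betw_nat_finite[OF assms] by blast
  define A where "A = Matrix.mat (card F) (card F) (\<lambda>(i, j). B (e i) (e j))"
  have "(cmod (det_fin F B))^2 \<le> (\<Prod>j<card F. norm2_fin (card F) (col_fun A j))"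
    using hadamard_inequality[of A "card F"] det_fin_eq_det_mat[OF e] by (simp add: A_def)
  also have "\<dots> = (\<Prod>j\<in>{0..<card F}. \<Sum>p\<in>F. (cmod (B p (e j)))^2)"
  proof (rule prod.cong)
    fix j assume "j \<in> {0..<card F}"
    then have "norm2_fin (card F) (col_fun A j) = (\<Sum>r\<in>{0..<card F}. (cmod (B (e r) (e j)))^2)"
      unfolding norm2_fin_def col_fun_def A_def by (auto intro!: sum.cong)
    also have "\<dots> = (\<Sum>p\<in>F. (cmod (B p (e j)))^2)"
      by (rule sum.reindex_bij_betw[OF e])
    finally show "norm2_fin (card F) (col_fun A j) = (\<Sum>p\<in>F. (cmod (B p (e j)))^2)" .
  qed (simp add: atLeast0LessThan)
  also have "\<dots> = (\<Prod>q\<in>F. \<Sum>p\<in>F. (cmod (B p q))^2)"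
    by (rule prod.reindex_bij_betw[OF e])
  finally show ?thesis .
qed

section \<open>Bounds for the 2-modified determinant\<close>

definition hs_norm2 :: "'i set \<Rightarrow> ('i \<Rightarrow> 'i \<Rightarrow> complex) \<Rightarrow> real" where
  "hs_norm2 F M = (\<Sum>q\<in>F. \<Sum>p\<in>F. (cmod (M p q))^2)"

lemma hs_norm2_nonneg: "hs_norm2 F M \<ge> 0"
  unfolding hs_norm2_def by (intro sum_nonneg) auto

lemma hs_norm2_eq_0D: "finite F \<Longrightarrow> hs_norm2 F M = 0 \<Longrightarrow> p \<in> F \<Longrightarrow> q \<in> F \<Longrightarrow> M p q = 0"
  unfolding hs_norm2_def by (subst (asm) sum_nonneg_eq_0_iff) (auto intro!: sum_nonneg simp: sum_nonneg_eq_0_iff)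

lemma sqrt_hs_norm2_eq_L2_set: "sqrt (hs_norm2 F M) = L2_set (\<lambda>(q, p). cmod (M p q)) (F \<times> F)"
  unfolding hs_norm2_def L2_set_def by (simp add: sum.cartesian_product case_prod_beta)

lemma sqrt_hs_norm2_triangle:
  "sqrt (hs_norm2 F (\<lambda>p q. A p q + B p q)) \<le> sqrt (hs_norm2 F A) + sqrt (hs_norm2 F B)"
proof -
  have "L2_set (\<lambda>(q, p). cmod (A p q + B p q)) (F \<times> F) \<le>
        L2_set (\<lambda>x. (\<lambda>(q, p). cmod (A p q)) x + (\<lambda>(q, p). cmod (B p q)) x) (F \<times> F)"
    by (intro L2_set_mono) (auto simp: norm_triangle_ineq)
  also have "\<dots> \<le> L2_set (\<lambda>(q, p). cmod (A p q)) (F \<times> F) + L2_set (\<lambda>(q, p). cmod (B p q)) (F \<times> F)"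
    by (rule L2_set_triangle_ineq)
  finally show ?thesis by (simp add: sqrt_hs_norm2_eq_L2_set)
qed

lemma hs_norm2_scale: "hs_norm2 F (\<lambda>p q. c * M p q) = (cmod c)^2 * hs_norm2 F M"
  unfolding hs_norm2_def by (simp add: norm_mult power_mult_distrib sum_distrib_left)

lemma add_one_mult_exp_minus_le: "(1 + t + s) * exp (- t) \<le> exp (s :: real)"
proof -
  have "1 + t + s \<le> exp (t + s)" using exp_ge_add_one_self[of "t + s"] by (simp add: add.assoc)
  then have "(1 + t + s) * exp (- t) \<le> exp (t + s) * exp (- t)" by (rule mult_right_mono) simp
  then show ?thesis by (simp add: exp_add[symmetric])
qed

text \<open>Carleman's inequality \<open>|det\<^sub>2(I + M)| \<le> exp (\<parallel>M\<parallel>\<^sub>2\<^sup>2 / 2)\<close>: apply Hadamard's inequality to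
  \<open>I + M\<close>; the factor \<open>e\<^sup>-\<^sup>t\<^sup>r \<^sup>M\<close> exactly cancels the first-order terms \<open>2 Re M\<^sub>q\<^sub>q\<close> of the column norms.\<close>

theorem norm_det2_fin_le:
  assumes fin: "finite F"
  shows "cmod (det2_fin F M) \<le> exp (hs_norm2 F M / 2)"
proof -
  define B where "B = (\<lambda>i j. (if i = j then 1 else 0) + M i j)"
  define s where "s q = (\<Sum>p\<in>F. (cmod (M p q))^2)" for q
  have col: "(\<Sum>p\<in>F. (cmod (B p q))^2) = 1 + 2 * Re (M q q) + s q" if q: "q \<in> F" for q
  proof -
    have "(\<Sum>p\<in>F-{q}. (cmod (B p q))^2) = (\<Sum>p\<in>F-{q}. (cmod (M p q))^2)"
      by (intro sum.cong) (auto simp: B_def)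
    then have "(\<Sum>p\<in>F. (cmod (B p q))^2) = (cmod (1 + M q q))^2 + (\<Sum>p\<in>F-{q}. (cmod (M p q))^2)"
      using q fin by (simp add: sum.remove B_def)
    moreover have "s q = (cmod (M q q))^2 + (\<Sum>p\<in>F-{q}. (cmod (M p q))^2)"
      unfolding s_def using q fin by (simp add: sum.remove)
    moreover have "(cmod (1 + M q q))^2 = 1 + 2 * Re (M q q) + (cmod (M q q))^2"
      unfolding cmod_power2 by (simp add: power2_eq_square algebra_simps)
    ultimately show ?thesis by simp
  qed
  have "(cmod (det2_fin F M))^2 = (cmod (det_fin F B))^2 * (\<Prod>q\<in>F. exp (- 2 * Re (M q q)))"
    unfolding det2_fin_def B_def
    by (simp add: norm_mult power_mult_distrib norm_exp_eq_Re Re_sum exp_sum[symmetric] fin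
        power2_eq_square exp_add[symmetric] sum_negf sum_distrib_left)
  also have "\<dots> \<le> (\<Prod>q\<in>F. (1 + 2 * Re (M q q) + s q) * exp (- 2 * Re (M q q)))"
    using hadamard_inequality_det_fin[OF fin, of B]
    by (simp add: prod.distrib col cong: prod.cong) (intro mult_right_mono prod_nonneg; simp)
  also have "\<dots> \<le> (\<Prod>q\<in>F. exp (s q))"
  proof (rule prod_mono)
    fix q assume q: "q \<in> F"
    have "0 \<le> 1 + 2 * Re (M q q) + s q" using col[OF q, symmetric] by (simp add: sum_nonneg)
    then show "0 \<le> (1 + 2 * Re (M q q) + s q) * exp (- 2 * Re (M q q)) \<and>
       (1 + 2 * Re (M q q) + s q) * exp (- 2 * Re (M q q)) \<le> exp (s q)"
      using add_one_mult_exp_minus_le[of "2 * Re (M q q)" "s q"] by simp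
  qed
  also have "\<dots> = (exp (hs_norm2 F M / 2))^2"
    by (simp add: hs_norm2_def s_def exp_sum fin exp_double[symmetric])
  finally show ?thesis by (rule power2_le_imp_le) simp
qed

lemma det2_fin_cong:
  "(\<And>p q. p \<in> F \<Longrightarrow> q \<in> F \<Longrightarrow> A p q = B p q) \<Longrightarrow> det2_fin F A = det2_fin F B"
  unfolding det2_fin_def det_fin_def
  by (intro arg_cong2[where f = "(*)"] sum.cong prod.cong arg_cong[where f = exp] arg_cong[where f = uminus])
     (auto simp: permutes_in_image)

lemma holomorphic_det2_fin_affine:
  "finite F \<Longrightarrow> (\<lambda>z. det2_fin F (\<lambda>p q. B p q + z * D p q)) holomorphic_on UNIV"
  unfolding det2_fin_def det_fin_def by (intro holomorphic_intros)

text \<open>Cauchy's estimate on discs of radius \<open>1\<close> bounds the derivative by \<open>K\<close> on \<open>cball 0 r\<close>.\<close>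

lemma holomorphic_lipschitz_on_cball:
  assumes f: "f holomorphic_on UNIV" and K: "\<And>x. cmod x \<le> r + 1 \<Longrightarrow> cmod (f x) \<le> K"
    and z: "cmod z \<le> r" and w: "cmod w \<le> r"
  shows "cmod (f z - f w) \<le> K * cmod (z - w)"
proof (rule field_differentiable_bound[where f' = "deriv f" and S = "cball 0 r"])
  show "(f has_field_derivative deriv f y) (at y within cball 0 r)" for y :: complex
    using f by (intro holomorphic_derivI) auto
  fix y :: complex assume "y \<in> cball 0 r"
  then have y: "cmod y \<le> r" by simp
  have "cmod ((deriv ^^ 1) f y) \<le> fact 1 * K / 1 ^ 1"
  proof (rule Cauchy_inequality)
    show "f holomorphic_on ball y 1" "continuous_on (cball y 1) f"
      using f holomorphic_on_subset holomorphic_on_imp_continuous_on by blast+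
    fix x assume "cmod (y - x) = 1"
    then show "cmod (f x) \<le> K" using y norm_triangle_ineq2[of x y] by (intro K) (simp add: norm_minus_commute)
  qed simp
  then show "cmod (deriv f y) \<le> K" by simp
qed (use z w in auto)

text \<open>Along the line \<open>B + z (A - B) / \<parallel>A - B\<parallel>\<^sub>2\<close>, Carleman's inequality bounds \<open>det\<^sub>2\<close> on the disc
  \<open>|z| \<le> \<parallel>A - B\<parallel>\<^sub>2 + 1\<close>, where the Hilbert--Schmidt norm is at most \<open>3 H + 1\<close>.\<close>

theorem det2_fin_lipschitz:
  assumes fin: "finite F" and HA: "sqrt (hs_norm2 F A) \<le> H" and HB: "sqrt (hs_norm2 F B) \<le> H"
  shows "cmod (det2_fin F A - det2_fin F B) \<le> exp ((3 * H + 1)^2 / 2) * sqrt (hs_norm2 F (\<lambda>p q. A p q - B p q))"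
proof -
  define D where "D = (\<lambda>p q. A p q - B p q)"
  define d where "d = sqrt (hs_norm2 F D)"
  have "d \<le> sqrt (hs_norm2 F A) + sqrt (hs_norm2 F (\<lambda>p q. (-1) * B p q))"
    unfolding d_def D_def using sqrt_hs_norm2_triangle[of F A "\<lambda>p q. (-1) * B p q"] by simp
  also have "sqrt (hs_norm2 F (\<lambda>p q. (-1) * B p q)) = sqrt (hs_norm2 F B)"
    using hs_norm2_scale[of F "-1" B] by simp
  finally have dH: "d \<le> 2 * H" using HA HB by linarith
  show ?thesis
  proof (cases "d = 0")
    case True
    then have "det2_fin F A = det2_fin F B"
      using hs_norm2_eq_0D[OF fin, of D] by (intro det2_fin_cong) (auto simp: d_def D_def)
    then show ?thesis by (simp add: hs_norm2_nonneg)
  next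
    case False
    moreover have "d \<ge> 0" unfolding d_def by (simp add: hs_norm2_nonneg)
    ultimately have d: "d > 0" by simp
    define E where "E p q = D p q / complex_of_real d" for p q
    have norm_E: "sqrt (hs_norm2 F (\<lambda>p q. z * E p q)) = cmod z" for z
    proof -
      have eq: "(\<lambda>p q. z * E p q) = (\<lambda>p q. (z / complex_of_real d) * D p q)"
        by (simp add: E_def fun_eq_iff)
      have "sqrt (hs_norm2 F (\<lambda>p q. z * E p q)) = cmod (z / complex_of_real d) * d"
        by (simp only: eq hs_norm2_scale real_sqrt_mult real_sqrt_abs abs_norm_cancel d_def[symmetric])
      then show ?thesis using d by (simp add: norm_divide)
    qed
    define g where "g z = det2_fin F (\<lambda>p q. B p q + z * E p q)" for z
    have "cmod (g (complex_of_real d) - g 0) \<le> exp ((3 * H + 1)^2 / 2) * cmod (complex_of_real d - 0)"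
    proof (rule holomorphic_lipschitz_on_cball[where r = d])
      show "g holomorphic_on UNIV" unfolding g_def by (rule holomorphic_det2_fin_affine[OF fin])
      fix x :: complex assume x: "cmod x \<le> d + 1"
      have "sqrt (hs_norm2 F (\<lambda>p q. B p q + x * E p q)) \<le> H + cmod x"
        using sqrt_hs_norm2_triangle[of F B "\<lambda>p q. x * E p q"] HB by (simp add: norm_E)
      also have "\<dots> \<le> 3 * H + 1" using x dH by linarith
      finally have "hs_norm2 F (\<lambda>p q. B p q + x * E p q) / 2 \<le> (3 * H + 1)^2 / 2"
        by (simp add: sqrt_le_D)
      then show "cmod (g x) \<le> exp ((3 * H + 1)^2 / 2)"
        unfolding g_def using norm_det2_fin_le[OF fin, of "\<lambda>p q. B p q + x * E p q"]
        by (meson exp_le_cancel_iff order.trans)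
    qed (use d in auto)
    moreover have "g (complex_of_real d) = det2_fin F A" "g 0 = det2_fin F B"
      unfolding g_def E_def using d by (auto intro!: det2_fin_cong simp: D_def)
    ultimately show ?thesis using d by (simp add: d_def D_def)
  qed
qed

lemma det2_fin_restrict:
  assumes G: "finite G" and FG: "F \<subseteq> G"
  shows "det2_fin G (\<lambda>p q. if p \<in> F \<and> q \<in> F then M p q else 0) = det2_fin F M"
proof -
  define B where "B = (\<lambda>i j. (if i = j then 1 else 0) + (if i \<in> F \<and> j \<in> F then M i j else 0))"
  have "det_fin G B = det_fin F (\<lambda>i j. (if i = j then 1 else 0) + M i j)"
    unfolding det_fin_def
  proof (rule sum.mono_neutral_cong_right)
    show "finite {p. p permutes G}" using G by (rule finite_permutations)
    show "{p. p permutes F} \<subseteq> {p. p permutes G}" using FG by (auto intro: permutes_subset)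
    show "\<forall>p \<in> {p. p permutes G} - {p. p permutes F}. of_int (sign p) * (\<Prod>i\<in>G. B i (p i)) = 0"
    proof
      fix p assume p: "p \<in> {p. p permutes G} - {p. p permutes F}"
      then obtain x where x: "x \<notin> F" "p x \<noteq> x"
        unfolding permutes_def by blast
      then have "x \<in> G" using p by (auto dest: permutes_not_in)
      moreover have "B x (p x) = 0" using x by (simp add: B_def)
      ultimately show "of_int (sign p) * (\<Prod>i\<in>G. B i (p i)) = 0" using G by (auto intro: prod_zero)
    qed
    fix p assume "p \<in> {p. p permutes F}"
    then have p: "p permutes F" by simp
    have "(\<Prod>i\<in>G. B i (p i)) = (\<Prod>i\<in>F. B i (p i)) * (\<Prod>i\<in>G - F. B i (p i))"
      using G FG by (metis prod.subset_diff mult.commute)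
    also have "(\<Prod>i\<in>G - F. B i (p i)) = 1"
      using p by (intro prod.neutral) (auto simp: B_def permutes_not_in)
    finally show "of_int (sign p) * (\<Prod>i\<in>G. B i (p i)) = of_int (sign p) * (\<Prod>i\<in>F. (if i = p i then 1 else 0) + M i (p i))"
      using p by (simp add: B_def permutes_in_image cong: prod.cong)
  qed
  moreover have "(\<Sum>i\<in>G. if i \<in> F \<and> i \<in> F then M i i else 0) = (\<Sum>i\<in>F. M i i)"
    using G FG by (simp add: sum.If_cases Int_absorb1)
  ultimately show ?thesis unfolding det2_fin_def B_def by simp
qed

section \<open>Convergence of compressions\<close>

definition finite_exhaustion :: "'i set \<Rightarrow> (nat \<Rightarrow> 'i set) \<Rightarrow> bool" where
  "finite_exhaustion S F \<longleftrightarrow> (\<forall>j. finite (F j) \<and> F j \<subseteq> S) \<and> incseq F \<and> (\<Union>j. F j) = S"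

lemma det2_eqI:
  assumes T: "finite_exhaustion S T"
    and lim: "\<And>F. finite_exhaustion S F \<Longrightarrow> (\<lambda>j. det2_fin (F j) M) \<longlonglongrightarrow> L"
  shows "det2 S M = L"
  unfolding det2_def
proof (rule the_equality)
  show "\<forall>F. (\<forall>j. finite (F j) \<and> F j \<subseteq> S) \<and> incseq F \<and> (\<Union>j. F j) = S \<longrightarrow> (\<lambda>j. det2_fin (F j) M) \<longlonglongrightarrow> L"
    using lim unfolding finite_exhaustion_def by blast
  fix L' assume "\<forall>F. (\<forall>j. finite (F j) \<and> F j \<subseteq> S) \<and> incseq F \<and> (\<Union>j. F j) = S \<longrightarrow> (\<lambda>j. det2_fin (F j) M) \<longlonglongrightarrow> L'"
  then have "(\<lambda>j. det2_fin (T j) M) \<longlonglongrightarrow> L'" using T unfolding finite_exhaustion_def by blast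
  then show "L' = L" using lim[OF T] by (rule LIMSEQ_unique)
qed

lemma finite_exhaustion_eventually_superset:
  assumes "finite_exhaustion S F" "finite A" "A \<subseteq> S"
  shows "\<forall>\<^sub>F j in sequentially. A \<subseteq> F j"
  using assms(2,3)
proof (induction A rule: finite_induct)
  case (insert x A)
  then obtain j where "x \<in> F j" using assms(1) unfolding finite_exhaustion_def by blast
  then have "\<forall>\<^sub>F j' in sequentially. x \<in> F j'"
    using assms(1) unfolding finite_exhaustion_def eventually_sequentially by (metis incseqD subsetD)
  with insert show ?case by (auto elim: eventually_mono[OF eventually_conj])
qed simp

lemma det2_fin_convergent_if_close:
  assumes T: "finite_exhaustion UNIV T" and e: "e \<longlonglongrightarrow> 0"
    and close: "\<And>J J'. N \<le> J \<Longrightarrow> J \<le> J' \<Longrightarrow> cmod (det2_fin (T J) M - det2_fin (T J') M) \<le> e J"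
  obtains L where "(\<lambda>j. det2_fin (T j) M) \<longlonglongrightarrow> L" "\<And>J. N \<le> J \<Longrightarrow> cmod (det2_fin (T J) M - L) \<le> e J"
proof -
  define d where "d j = det2_fin (T j) M" for j
  have dd: "cmod (d J - d J') \<le> e J" if "N \<le> J" "J \<le> J'" for J J'
    unfolding d_def using that by (rule close)
  have "Cauchy d"
  proof (rule metric_CauchyI)
    fix \<epsilon> :: real assume "\<epsilon> > 0"
    then have "\<forall>\<^sub>F J in sequentially. e J < \<epsilon>" using e by (auto dest: order_tendstoD)
    then obtain J0 where J0: "\<And>J. J \<ge> J0 \<Longrightarrow> e J < \<epsilon>"
      unfolding eventually_sequentially by blast
    have "dist (d m) (d n) < \<epsilon>" if "m \<ge> max N J0" "n \<ge> max N J0" for m n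
      using dd[of m n] dd[of n m] J0[of m] J0[of n] that
      by (cases "m \<le> n") (auto simp: dist_norm norm_minus_commute)
    then show "\<exists>M. \<forall>m\<ge>M. \<forall>n\<ge>M. dist (d m) (d n) < \<epsilon>" by blast
  qed
  then obtain L where L: "d \<longlonglongrightarrow> L" by (auto simp: Cauchy_convergent_iff convergent_def)
  moreover have "cmod (d J - L) \<le> e J" if "N \<le> J" for J
    by (rule LIMSEQ_le_const2[where X = "\<lambda>J'. cmod (d J - d J')"])
       (use L dd that in \<open>auto intro!: tendsto_intros\<close>)
  ultimately show ?thesis using that unfolding d_def by blast
qed

text \<open>The hypothesis is a Cauchy condition, uniform over all finite supersets of \<open>T J\<close>; it is what makes
  the \<open>THE\<close> in the definition of \<open>det\<^sub>2\<close> meaningful (the limit exists along every exhaustion).\<close>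

theorem norm_det2_fin_minus_det2_le:
  assumes T: "finite_exhaustion UNIV T" and e: "e \<longlonglongrightarrow> 0"
    and close: "\<And>J F G. N \<le> J \<Longrightarrow> T J \<subseteq> F \<Longrightarrow> F \<subseteq> G \<Longrightarrow> finite G \<Longrightarrow>
                  cmod (det2_fin F M - det2_fin G M) \<le> e J"
    and J: "N \<le> J"
  shows "cmod (det2_fin (T J) M - det2 UNIV M) \<le> e J"
proof -
  have T': "finite (T j)" "T j \<subseteq> T j'" if "j \<le> j'" for j j'
    using T that unfolding finite_exhaustion_def by (auto dest: incseqD)
  have "cmod (det2_fin (T J) M - det2_fin (T J') M) \<le> e J" if "N \<le> J" "J \<le> J'" for J J'
    using that T' by (intro close) auto
  then obtain L where L: "\<And>J. N \<le> J \<Longrightarrow> cmod (det2_fin (T J) M - L) \<le> e J"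
    using det2_fin_convergent_if_close[OF T e] by blast
  have "(\<lambda>j. det2_fin (F j) M) \<longlonglongrightarrow> L" if F: "finite_exhaustion UNIV F" for F
  proof (rule LIMSEQ_I)
    fix r :: real assume "r > 0"
    then have "\<forall>\<^sub>F J in sequentially. e J < r / 2" using order_tendstoD(2)[OF e, of "r / 2"] by simp
    then obtain J1 where "\<And>J. J \<ge> J1 \<Longrightarrow> e J < r / 2" unfolding eventually_sequentially by blast
    then obtain J where J: "N \<le> J" "e J < r / 2" by (metis max.cobounded1 max.cobounded2)
    have "\<forall>\<^sub>F j in sequentially. T J \<subseteq> F j"
      using F T' by (intro finite_exhaustion_eventually_superset) auto
    then obtain j0 where j0: "\<And>j. j \<ge> j0 \<Longrightarrow> T J \<subseteq> F j" by (auto simp: eventually_sequentially)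
    have "cmod (det2_fin (F j) M - L) < r" if "j \<ge> j0" for j
    proof -
      have "cmod (det2_fin (T J) M - det2_fin (F j) M) \<le> e J"
        using F j0[OF that] J unfolding finite_exhaustion_def by (intro close) auto
      then show ?thesis
        using L[OF J(1)] J(2) norm_triangle_ineq[of "det2_fin (F j) M - det2_fin (T J) M" "det2_fin (T J) M - L"]
        by (simp add: norm_minus_commute)
    qed
    then show "\<exists>j0. \<forall>j\<ge>j0. cmod (det2_fin (F j) M - L) < r" by blast
  qed
  then have "det2 UNIV M = L" using T by (intro det2_eqI)
  then show ?thesis using L[OF J] by simp
qed

lemma finite_exhaustion_trunc_idx: "finite_exhaustion UNIV (trunc_idx :: nat \<Rightarrow> (int \<times> 'n::finite) set)"
proof -
  have "(trunc_idx J :: (int \<times> 'n) set) = {- int J..int J} \<times> UNIV" for J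
    by (auto simp: trunc_idx_def)
  then have "finite (trunc_idx J :: (int \<times> 'n) set)" for J by simp
  moreover have "x \<in> trunc_idx (nat \<bar>fst x\<bar>)" for x :: "int \<times> 'n"
    by (cases x) (auto simp: trunc_idx_def)
  then have "(\<Union>J. trunc_idx J :: (int \<times> 'n) set) = UNIV" by blast
  moreover have "incseq (trunc_idx :: nat \<Rightarrow> (int \<times> 'n) set)"
    by (auto simp: incseq_def trunc_idx_def)
  ultimately show ?thesis unfolding finite_exhaustion_def by blast
qed

section \<open>Sums over Fourier indices\<close>

lemma power2_add_le: "(x + y)^2 \<le> 2 * (x^2 + y^2 :: real)"
proof -
  have "0 \<le> (x - y)^2" by simp
  then show ?thesis by (simp add: power2_eq_square algebra_simps)
qed

lemma inverse_one_plus_sq_le_telescoping: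
  assumes "t > 0"
  shows "1 / (1 + t^2) \<le> 2 / t - 2 / (1 + t :: real)"
proof -
  have "0 \<le> (t - 1)^2" by simp
  then have "t * (1 + t) \<le> 2 * (1 + t^2)" using assms by (simp add: power2_eq_square algebra_simps)
  then have "2 / (2 * (1 + t^2)) \<le> 2 / (t * (1 + t))"
    using assms by (intro divide_left_mono) (auto intro!: mult_pos_pos add_pos_nonneg)
  moreover have "2 / (2 * (1 + t^2)) = 1 / (1 + t^2)"
    by (subst mult_divide_mult_cancel_left[of 2, symmetric]) simp_all
  moreover have "2 / (t * (1 + t)) = 2 / t - 2 / (1 + t)" using assms by (simp add: field_simps)
  ultimately show ?thesis by simp
qed

lemma sum_inverse_one_plus_sq_nat_gt:
  assumes K: "finite K" "\<And>t. t \<in> K \<Longrightarrow> t > J"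
  shows "(\<Sum>t\<in>K. 1 / (1 + (real t)^2)) \<le> 2 / (real J + 1)"
proof -
  define N where "N = Suc (Max (insert J K))"
  have KN: "K \<subseteq> {Suc J..<N}" using K by (auto simp: N_def Suc_le_eq le_imp_less_Suc)
  have "(\<Sum>t\<in>K. 1 / (1 + (real t)^2)) \<le> (\<Sum>t = Suc J..<N. 1 / (1 + (real t)^2))"
    using KN by (intro sum_mono2) auto
  also have "\<dots> \<le> (\<Sum>t = Suc J..<N. (\<lambda>i. - 2 / real i) (Suc t) - (\<lambda>i. - 2 / real i) t)"
  proof (intro sum_mono)
    fix t assume "t \<in> {Suc J..<N}"
    then show "1 / (1 + (real t)^2) \<le> (\<lambda>i. - 2 / real i) (Suc t) - (\<lambda>i. - 2 / real i) t"
      using inverse_one_plus_sq_le_telescoping[of "real t"] by simp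
  qed
  also have "\<dots> = 2 / (real J + 1) - 2 / real N"
    using K(1) by (subst sum_Suc_diff') (auto simp: N_def)
  also have "\<dots> \<le> 2 / (real J + 1)" by simp
  finally show ?thesis .
qed

lemma sum_inverse_one_plus_sq_int_gt:
  assumes K: "finite K" "\<And>k. k \<in> K \<Longrightarrow> \<bar>k\<bar> > int J"
  shows "(\<Sum>k\<in>K. 1 / (1 + (real_of_int k)^2)) \<le> 4 / (real J + 1)"
proof -
  define f :: "int \<Rightarrow> real" where "f k = 1 / (1 + (real_of_int k)^2)" for k
  have pos: "sum f P \<le> 2 / (real J + 1)" if P: "finite P" "\<And>k. k \<in> P \<Longrightarrow> k > int J" for P
  proof -
    have P0: "k \<ge> 0" if "k \<in> P" for k using that P(2) by force
    then have "inj_on nat P" by (metis inj_onI eq_nat_nat_iff)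
    then have "sum f P = (\<Sum>t\<in>nat ` P. 1 / (1 + (real t)^2))"
      using P0 by (simp add: sum.reindex f_def)
    also have "\<dots> \<le> 2 / (real J + 1)"
      using P by (intro sum_inverse_one_plus_sq_nat_gt) (auto simp: zless_nat_eq_int_zless)
    finally show ?thesis .
  qed
  have "K = {k\<in>K. k > 0} \<union> {k\<in>K. k < 0}" using K(2) by force
  then have "sum f K = sum f {k\<in>K. k > 0} + sum f {k\<in>K. k < 0}"
    using K(1) by (metis (no_types, lifting) sum.union_disjoint finite_Un disjoint_iff mem_Collect_eq not_less_iff_gr_or_eq)
  also have "sum f {k\<in>K. k < 0} = sum f (uminus ` {k\<in>K. k < 0})"
    by (subst sum.reindex) (auto simp: inj_on_def f_def)
  also have "sum f {k\<in>K. k > 0} + sum f (uminus ` {k\<in>K. k < 0}) \<le> 2 / (real J + 1) + 2 / (real J + 1)"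
    using K(1) by (intro add_mono pos) (auto dest!: K(2) simp: abs_if split: if_splits)
  finally show ?thesis by (simp add: f_def)
qed

lemma sum_inverse_one_plus_sq_int_le:
  assumes "finite K"
  shows "(\<Sum>k\<in>K. 1 / (1 + (real_of_int k)^2)) \<le> 5"
proof -
  have "(\<Sum>k\<in>K. 1 / (1 + (real_of_int k)^2)) =
        (\<Sum>k\<in>K \<inter> {0}. 1 / (1 + (real_of_int k)^2)) + (\<Sum>k\<in>K - {0}. 1 / (1 + (real_of_int k)^2))"
    using assms by (metis Diff_eq sum.Int_Diff Int_commute)
  also have "(\<Sum>k\<in>K \<inter> {0}. 1 / (1 + (real_of_int k)^2)) \<le> 1"
    by (cases "0 \<in> K") (auto simp: Int_insert_right)
  also have "(\<Sum>k\<in>K - {0}. 1 / (1 + (real_of_int k)^2)) \<le> 4 / (real 0 + 1)"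
    using assms by (intro sum_inverse_one_plus_sq_int_gt) auto
  finally show ?thesis by simp
qed

lemma sum_truncated_weight_le:
  assumes K: "finite K" and AB: "A \<ge> 0" "B \<ge> 0"
  shows "(\<Sum>k\<in>K. if \<bar>k\<bar> > int J then A / (1 + (real_of_int k)^2) else B)
         \<le> 4 * A / (real J + 1) + (2 * real J + 1) * B"
proof -
  have "(\<Sum>k\<in>K. if \<bar>k\<bar> > int J then A / (1 + (real_of_int k)^2) else B) =
        A * (\<Sum>k\<in>K \<inter> {k. \<bar>k\<bar> > int J}. 1 / (1 + (real_of_int k)^2)) + (\<Sum>k\<in>K \<inter> - {k. \<bar>k\<bar> > int J}. B)"
    by (simp only: sum.If_cases[OF K] sum_distrib_left times_divide_eq_right mult_1_right)
  also have "\<dots> \<le> A * (4 / (real J + 1)) + (\<Sum>k\<in>{- int J..int J}. B)"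
    using K AB by (intro add_mono mult_left_mono sum_inverse_one_plus_sq_int_gt sum_mono2) auto
  also have "(\<Sum>k\<in>{- int J..int J}. B) = (2 * real J + 1) * B"
  proof -
    have "card {- int J..int J} = 2 * J + 1" by simp
    then show ?thesis by simp
  qed
  finally show ?thesis by (simp add: mult.commute[of A 4])
qed

lemma sum_shifted_le_infsum:
  fixes h :: "'n::finite \<Rightarrow> int \<Rightarrow> real"
  assumes Q: "finite Q" and h: "\<And>j l. h j l \<ge> 0" "\<And>j. h j summable_on UNIV"
  shows "(\<Sum>(m, j)\<in>Q. h j (k - m)) \<le> (\<Sum>j\<in>UNIV. infsum (h j) UNIV)"
proof -
  have "(\<Sum>(m, j)\<in>Q. h j (k - m)) \<le> (\<Sum>(m, j)\<in>fst ` Q \<times> UNIV. h j (k - m))"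
    using Q by (intro sum_mono2) (auto simp: h split: prod.splits intro: rev_image_eqI)
  also have "\<dots> = (\<Sum>j\<in>UNIV. \<Sum>m\<in>fst ` Q. h j (k - m))"
    by (simp add: sum.cartesian_product[symmetric] sum.swap[of _ "fst ` Q"])
  also have "\<dots> \<le> (\<Sum>j\<in>UNIV. infsum (h j) UNIV)"
  proof (intro sum_mono)
    fix j
    have "(\<Sum>m\<in>fst ` Q. h j (k - m)) = (\<Sum>l\<in>(\<lambda>m. k - m) ` fst ` Q. h j l)"
      by (subst sum.reindex) (auto simp: inj_on_def)
    also have "\<dots> \<le> infsum (h j) UNIV"
      using Q by (intro finite_sum_le_infsum h) auto
    finally show "(\<Sum>m\<in>fst ` Q. h j (k - m)) \<le> infsum (h j) UNIV" .
  qed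
  finally show ?thesis .
qed

lemma sum_fst_le_card_mult:
  fixes \<phi> :: "int \<Rightarrow> real" and P :: "(int \<times> 'n::finite) set"
  assumes "finite P" "\<And>k. \<phi> k \<ge> 0"
  shows "(\<Sum>(k, i)\<in>P. \<phi> k) \<le> real CARD('n) * (\<Sum>k\<in>fst ` P. \<phi> k)"
proof -
  have "(\<Sum>(k, i)\<in>P. \<phi> k) \<le> (\<Sum>(k, i)\<in>fst ` P \<times> (UNIV :: 'n set). \<phi> k)"
    using assms by (intro sum_mono2) (auto split: prod.splits intro: rev_image_eqI)
  also have "\<dots> = real CARD('n) * (\<Sum>k\<in>fst ` P. \<phi> k)"
    by (simp add: sum.cartesian_product[symmetric] sum_distrib_left mult.commute)
  finally show ?thesis .
qed

text \<open>A Peetre-type inequality: from \<open>|k| \<le> J < |m|\<close> we get \<open>J + 1 \<le> |k| + |k - m|\<close>.\<close>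

lemma peetre_weight_ge:
  fixes k m :: int
  assumes "\<bar>k\<bar> \<le> int J" "\<bar>m\<bar> > int J"
  shows "(real J + 1)^2 \<le> 2 * ((1 + (real_of_int k)^2) * (1 + (real_of_int (k - m))^2))"
proof -
  have "real J + 1 \<le> \<bar>real_of_int k\<bar> + \<bar>real_of_int (k - m)\<bar>"
    using assms by linarith
  then have "(real J + 1)^2 \<le> (\<bar>real_of_int k\<bar> + \<bar>real_of_int (k - m)\<bar>)^2"
    by (intro power_mono) auto
  also have "\<dots> \<le> 2 * ((real_of_int k)^2 + (real_of_int (k - m))^2)"
    using power2_add_le[of "\<bar>real_of_int k\<bar>" "\<bar>real_of_int (k - m)\<bar>"] by simp
  also have "\<dots> \<le> 2 * ((1 + (real_of_int k)^2) * (1 + (real_of_int (k - m))^2))"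
    by (simp add: algebra_simps)
  finally show ?thesis .
qed

section \<open>Matrices with Sobolev-type decay\<close>

definition kernel_weight :: "('n::finite \<Rightarrow> 'n \<Rightarrow> int \<Rightarrow> real) \<Rightarrow> real" where
  "kernel_weight g = (\<Sum>i\<in>UNIV. \<Sum>j\<in>UNIV. infsum (\<lambda>l. (1 + (real_of_int l)^2) * g i j l) UNIV)"

definition kernel_hs_bound :: "('n::finite \<Rightarrow> 'n \<Rightarrow> int \<Rightarrow> real) \<Rightarrow> real \<Rightarrow> real" where
  "kernel_hs_bound g C0 = 5 * real CARD('n) * C0 * (kernel_weight g + 1)"

definition kernel_tail_bound :: "('n::finite \<Rightarrow> 'n \<Rightarrow> int \<Rightarrow> real) \<Rightarrow> real \<Rightarrow> real" where
  "kernel_tail_bound g C0 = 4 * real CARD('n) * C0 * (2 * kernel_weight g + 1)"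

definition det2_trunc_constant :: "('n::finite \<Rightarrow> 'n \<Rightarrow> int \<Rightarrow> real) \<Rightarrow> real \<Rightarrow> real" where
  "det2_trunc_constant g C0 =
     exp ((3 * sqrt (kernel_hs_bound g C0) + 1)^2 / 2) * sqrt (kernel_tail_bound g C0)"

lemma sqrt_divide_eq_powr: "sqrt (c / real n) = sqrt c * real n powr (-1/2)"
proof -
  have "real n powr (-1/2) = real n powr (- (1/2))" by simp
  also have "\<dots> = inverse (real n powr (1/2))" by (rule powr_minus)
  also have "real n powr (1/2) = sqrt (real n)" by (rule powr_half_sqrt) simp
  finally have "real n powr (-1/2) = inverse (sqrt (real n))" .
  moreover have "sqrt (c / real n) = sqrt c * inverse (sqrt (real n))"
    by (subst real_sqrt_divide) (rule divide_inverse)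
  ultimately show ?thesis by simp
qed

text \<open>The entries of the matrix \<open>M\<close> decay like those of \<open>(\<partial>\<^sub>x\<^sup>2 - 1)\<^sup>-\<^sup>1\<^sup>/\<^sup>2 (I + a)\<close> with \<open>a\<close> a multiplication
  operator whose Fourier coefficients (squared, in \<open>g\<close>) are summable with weight \<open>1 + l\<^sup>2\<close>.\<close>

locale sobolev_kernel =
  fixes M :: "(int \<times> 'n::finite) \<Rightarrow> (int \<times> 'n) \<Rightarrow> complex"
    and g :: "'n \<Rightarrow> 'n \<Rightarrow> int \<Rightarrow> real" and C0 :: real
  assumes g_nonneg: "g i j l \<ge> 0"
    and g_weighted_summable: "(\<lambda>l. (1 + (real_of_int l)^2) * g i j l) summable_on UNIV"
    and C0_nonneg: "C0 \<ge> 0"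
    and entry_bound: "(cmod (M (k, i) (m, j)))^2 \<le>
        C0 / (1 + (real_of_int k)^2) * (g i j (k - m) + (if k = m \<and> i = j then 1 else 0))"
begin

lemma g_le_weighted: "g i j l \<le> (1 + (real_of_int l)^2) * g i j l"
  using g_nonneg[of i j l] by (simp add: mult_le_cancel_right1)

lemma g_summable: "g i j summable_on UNIV"
  by (rule summable_on_comparison_test[OF g_weighted_summable]) (auto simp: g_nonneg intro: g_le_weighted)

lemma row_weighted_le_kernel_weight:
  "(\<Sum>j\<in>UNIV. infsum (\<lambda>l. (1 + (real_of_int l)^2) * g i j l) UNIV) \<le> kernel_weight g"
  unfolding kernel_weight_def
  by (rule member_le_sum) (auto intro!: sum_nonneg infsum_nonneg simp: g_nonneg)

lemma kernel_weight_nonneg: "kernel_weight g \<ge> 0"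
  unfolding kernel_weight_def by (auto intro!: sum_nonneg infsum_nonneg simp: g_nonneg)

lemma row_le_kernel_weight: "(\<Sum>j\<in>UNIV. infsum (g i j) UNIV) \<le> kernel_weight g"
proof -
  have "(\<Sum>j\<in>UNIV. infsum (g i j) UNIV) \<le> (\<Sum>j\<in>UNIV. infsum (\<lambda>l. (1 + (real_of_int l)^2) * g i j l) UNIV)"
    by (intro sum_mono infsum_mono g_summable g_weighted_summable g_le_weighted)
  then show ?thesis using row_weighted_le_kernel_weight[of i] by linarith
qed

lemma row_norm2_le:
  assumes Q: "finite Q"
  shows "(\<Sum>q\<in>Q. (cmod (M (k, i) q))^2) \<le> C0 * (kernel_weight g + 1) / (1 + (real_of_int k)^2)"
proof -
  define c where "c = C0 / (1 + (real_of_int k)^2)"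
  have c: "c \<ge> 0" using C0_nonneg by (simp add: c_def)
  have delta: "(\<Sum>(m, j)\<in>Q. if k = m \<and> i = j then 1 else 0) \<le> (1::real)"
  proof -
    have "(\<Sum>(m, j)\<in>Q. if k = m \<and> i = j then 1 else 0) = (\<Sum>q\<in>Q. if q = (k, i) then 1 else (0::real))"
      by (rule sum.cong) (auto split: prod.splits)
    then show ?thesis using Q by (simp add: sum.delta)
  qed
  have "(\<Sum>q\<in>Q. (cmod (M (k, i) q))^2) \<le> (\<Sum>(m, j)\<in>Q. c * (g i j (k - m) + (if k = m \<and> i = j then 1 else 0)))"
  proof (intro sum_mono)
    fix q show "(cmod (M (k, i) q))^2 \<le> (\<lambda>(m, j). c * (g i j (k - m) + (if k = m \<and> i = j then 1 else 0))) q"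
      unfolding c_def by (cases q) (simp only: prod.case, rule entry_bound)
  qed
  also have "\<dots> = c * (\<Sum>(m, j)\<in>Q. g i j (k - m)) + c * (\<Sum>(m, j)\<in>Q. if k = m \<and> i = j then 1 else 0)"
    by (simp add: sum.distrib distrib_left sum_distrib_left case_prod_beta)
  also have "\<dots> \<le> c * kernel_weight g + c * 1"
    using sum_shifted_le_infsum[OF Q, of "g i" k] row_le_kernel_weight[of i] delta c
    by (intro add_mono mult_left_mono) (auto simp: g_nonneg g_summable)
  finally show ?thesis by (simp add: c_def algebra_simps add_divide_distrib)
qed

lemma hs_norm2_le:
  assumes G: "finite G"
  shows "hs_norm2 G M \<le> kernel_hs_bound g C0"
proof -
  define A where "A = C0 * (kernel_weight g + 1)"
  have A: "A \<ge> 0" using C0_nonneg kernel_weight_nonneg by (simp add: A_def)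
  have "hs_norm2 G M = (\<Sum>p\<in>G. \<Sum>q\<in>G. (cmod (M p q))^2)" unfolding hs_norm2_def by (rule sum.swap)
  also have "\<dots> \<le> (\<Sum>(k, i)\<in>G. A / (1 + (real_of_int k)^2))"
    by (intro sum_mono) (auto simp: row_norm2_le G A_def split: prod.splits)
  also have "\<dots> \<le> real CARD('n) * (\<Sum>k\<in>fst ` G. A / (1 + (real_of_int k)^2))"
    using G A by (intro sum_fst_le_card_mult) auto
  also have "\<dots> = real CARD('n) * (A * (\<Sum>k\<in>fst ` G. 1 / (1 + (real_of_int k)^2)))"
    by (simp add: sum_distrib_left)
  also have "\<dots> \<le> real CARD('n) * (A * 5)"
    using sum_inverse_one_plus_sq_int_le[of "fst ` G"] G A by (intro mult_left_mono) auto
  finally show ?thesis by (simp add: kernel_hs_bound_def A_def)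
qed

lemma entry_sq_le_off_block:
  assumes "\<bar>k\<bar> \<le> int J" "\<bar>m\<bar> > int J"
  shows "(cmod (M (k, i) (m, j)))^2 \<le>
           2 * C0 / (real J + 1)^2 * ((1 + (real_of_int (k - m))^2) * g i j (k - m))"
proof -
  have pos: "1 + (real_of_int k)^2 > 0" "1 + (real_of_int (k - m))^2 > 0" by (auto intro: add_pos_nonneg)
  have "k \<noteq> m" using assms by auto
  then have "(cmod (M (k, i) (m, j)))^2 \<le> C0 / (1 + (real_of_int k)^2) * g i j (k - m)"
    using entry_bound[of k i m j] by simp
  also have "\<dots> = C0 * ((1 + (real_of_int (k - m))^2) * g i j (k - m)) /
                     ((1 + (real_of_int k)^2) * (1 + (real_of_int (k - m))^2))"
  proof -
    have "c / a * d = c * (b * d) / (a * b)" if "a > 0" "b > 0" for a b c d :: real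
      using that by (simp add: field_simps)
    then show ?thesis using pos by blast
  qed
  also have "\<dots> \<le> C0 * ((1 + (real_of_int (k - m))^2) * g i j (k - m)) / ((real J + 1)^2 / 2)"
    using peetre_weight_ge[OF assms] pos C0_nonneg g_nonneg[of i j "k - m"]
    by (intro divide_left_mono mult_nonneg_nonneg) (auto intro!: mult_pos_pos)
  finally show ?thesis by (simp add: field_simps)
qed

lemma row_norm2_outside_block_le:
  assumes G: "finite G"
  shows "(\<Sum>q\<in>G. if (k, i) \<in> trunc_idx J \<and> q \<in> trunc_idx J then 0 else (cmod (M (k, i) q))^2) \<le>
     (if \<bar>k\<bar> > int J then C0 * (kernel_weight g + 1) / (1 + (real_of_int k)^2)
      else 2 * C0 * kernel_weight g / (real J + 1)^2)"
proof (cases "\<bar>k\<bar> > int J")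
  case True
  then show ?thesis using row_norm2_le[OF G, of k i] by (simp add: trunc_idx_def)
next
  case False
  define w where "w j = (\<lambda>l. (1 + (real_of_int l)^2) * g i j l)" for j
  have w: "w j l \<ge> 0" "w j summable_on UNIV" for j l
    unfolding w_def by (simp_all add: g_nonneg g_weighted_summable)
  have w_le: "(\<Sum>j\<in>UNIV. infsum (w j) UNIV) \<le> kernel_weight g"
    using row_weighted_le_kernel_weight[of i] by (simp add: w_def)
  have "(\<Sum>q\<in>G. if (k, i) \<in> trunc_idx J \<and> q \<in> trunc_idx J then 0 else (cmod (M (k, i) q))^2) \<le>
        (\<Sum>(m, j)\<in>G. 2 * C0 / (real J + 1)^2 * w j (k - m))"
    using False entry_sq_le_off_block[of k J] C0_nonneg g_nonneg
    by (intro sum_mono) (auto simp: trunc_idx_def w_def)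
  also have "\<dots> = 2 * C0 / (real J + 1)^2 * (\<Sum>(m, j)\<in>G. w j (k - m))"
    by (simp add: sum_distrib_left case_prod_beta)
  also have "\<dots> \<le> 2 * C0 / (real J + 1)^2 * kernel_weight g"
    using sum_shifted_le_infsum[OF G, of w k] w w_le C0_nonneg by (intro mult_left_mono) auto
  finally show ?thesis using False by simp
qed

lemma hs_norm2_outside_block_le:
  assumes G: "finite G" and J: "J \<ge> 1"
  shows "hs_norm2 G (\<lambda>p q. if p \<in> trunc_idx J \<and> q \<in> trunc_idx J then 0 else M p q)
     \<le> kernel_tail_bound g C0 / real J"
proof -
  define W where "W = kernel_weight g"
  define A where "A = C0 * (W + 1)"
  define B where "B = 2 * C0 * W / (real J + 1)^2"
  have AB: "A \<ge> 0" "B \<ge> 0" using C0_nonneg kernel_weight_nonneg by (auto simp: A_def B_def W_def)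
  define \<phi> where "\<phi> k = (if \<bar>k\<bar> > int J then A / (1 + (real_of_int k)^2) else B)" for k
  have "hs_norm2 G (\<lambda>p q. if p \<in> trunc_idx J \<and> q \<in> trunc_idx J then 0 else M p q) =
        (\<Sum>p\<in>G. \<Sum>q\<in>G. if p \<in> trunc_idx J \<and> q \<in> trunc_idx J then 0 else (cmod (M p q))^2)"
    unfolding hs_norm2_def by (subst sum.swap) (auto intro!: sum.cong)
  also have "\<dots> \<le> (\<Sum>(k, i)\<in>G. \<phi> k)"
  proof (intro sum_mono)
    fix p :: "int \<times> 'n" obtain k i where p: "p = (k, i)" by (cases p)
    show "(\<Sum>q\<in>G. if p \<in> trunc_idx J \<and> q \<in> trunc_idx J then 0 else (cmod (M p q))^2) \<le> (\<lambda>(k, i). \<phi> k) p"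
      using row_norm2_outside_block_le[OF G, of k i J] unfolding p \<phi>_def A_def B_def W_def
      by (simp only: prod.case)
  qed
  also have "\<dots> \<le> real CARD('n) * (\<Sum>k\<in>fst ` G. \<phi> k)"
    using G AB by (intro sum_fst_le_card_mult) (auto simp: \<phi>_def)
  also have "\<dots> \<le> real CARD('n) * (4 * A / (real J + 1) + (2 * real J + 1) * B)"
    unfolding \<phi>_def using G AB by (intro mult_left_mono sum_truncated_weight_le) auto
  also have "\<dots> \<le> real CARD('n) * (4 * C0 * (2 * W + 1) / real J)"
  proof (intro mult_left_mono)
    have "(2 * real J + 1) * B \<le> 2 * (real J + 1) * B" using AB by (intro mult_right_mono) auto
    also have "\<dots> = 4 * C0 * W / (real J + 1)"
    proof -
      have "2 * x * (2 * C0 * W / x^2) = 4 * C0 * W / x" if "x > 0" for x :: real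
        using that by (simp add: power2_eq_square field_simps)
      from this[of "real J + 1"] show ?thesis unfolding B_def by simp
    qed
    finally have "(2 * real J + 1) * B \<le> 4 * C0 * W / (real J + 1)" .
    moreover have "4 * C0 * (2 * W + 1) = 4 * A + 4 * C0 * W" by (simp add: A_def algebra_simps)
    then have "4 * C0 * (2 * W + 1) / (real J + 1) = 4 * A / (real J + 1) + 4 * C0 * W / (real J + 1)"
      by (simp add: add_divide_distrib)
    ultimately have "4 * A / (real J + 1) + (2 * real J + 1) * B \<le> 4 * C0 * (2 * W + 1) / (real J + 1)"
      by linarith
    also have "\<dots> \<le> 4 * C0 * (2 * W + 1) / real J"
      using J C0_nonneg kernel_weight_nonneg by (intro divide_left_mono) (auto simp: W_def)
    finally show "4 * A / (real J + 1) + (2 * real J + 1) * B \<le> 4 * C0 * (2 * W + 1) / real J" .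
  qed simp
  finally show ?thesis by (simp add: kernel_tail_bound_def W_def mult_ac)
qed

lemma det2_fin_close:
  assumes G: "finite G" and FG: "F \<subseteq> G" and TF: "trunc_idx J \<subseteq> F" and J: "J \<ge> 1"
  shows "cmod (det2_fin F M - det2_fin G M) \<le> det2_trunc_constant g C0 * real J powr (-1/2)"
proof -
  define MF where "MF p q = (if p \<in> F \<and> q \<in> F then M p q else 0)" for p q
  have hs_M: "sqrt (hs_norm2 G M) \<le> sqrt (kernel_hs_bound g C0)"
    using hs_norm2_le[OF G] by (rule real_sqrt_le_mono)
  have "hs_norm2 G MF \<le> hs_norm2 G M" unfolding hs_norm2_def MF_def by (intro sum_mono) auto
  then have hs_MF: "sqrt (hs_norm2 G MF) \<le> sqrt (kernel_hs_bound g C0)"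
    using hs_norm2_le[OF G] by (intro real_sqrt_le_mono) linarith
  have "hs_norm2 G (\<lambda>p q. MF p q - M p q)
        \<le> hs_norm2 G (\<lambda>p q. if p \<in> trunc_idx J \<and> q \<in> trunc_idx J then 0 else M p q)"
    unfolding hs_norm2_def MF_def using TF by (intro sum_mono) auto
  also have "\<dots> \<le> kernel_tail_bound g C0 / real J" by (rule hs_norm2_outside_block_le[OF G J])
  finally have "sqrt (hs_norm2 G (\<lambda>p q. MF p q - M p q)) \<le> sqrt (kernel_tail_bound g C0 / real J)"
    by (rule real_sqrt_le_mono)
  also have "\<dots> = sqrt (kernel_tail_bound g C0) * real J powr (-1/2)"
    by (rule sqrt_divide_eq_powr)
  finally have tail: "sqrt (hs_norm2 G (\<lambda>p q. MF p q - M p q)) \<le> sqrt (kernel_tail_bound g C0) * real J powr (-1/2)" .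
  have restrict: "det2_fin F M = det2_fin G MF"
    unfolding MF_def by (rule det2_fin_restrict[OF G FG, symmetric])
  have "cmod (det2_fin G MF - det2_fin G M)
      \<le> exp ((3 * sqrt (kernel_hs_bound g C0) + 1)^2 / 2) * sqrt (hs_norm2 G (\<lambda>p q. MF p q - M p q))"
    by (rule det2_fin_lipschitz[OF G hs_MF hs_M])
  also have "\<dots> \<le> det2_trunc_constant g C0 * real J powr (-1/2)"
    using tail unfolding det2_trunc_constant_def mult.assoc by (intro mult_left_mono) auto
  finally show ?thesis by (simp only: restrict)
qed

theorem det2_trunc_error:
  assumes "J \<ge> 1"
  shows "cmod (det2_fin (trunc_idx J) M - det2 UNIV M) \<le> det2_trunc_constant g C0 * real J powr (-1/2)"
proof (rule norm_det2_fin_minus_det2_le[OF finite_exhaustion_trunc_idx _ _ assms])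
  show "(\<lambda>J. det2_trunc_constant g C0 * real J powr (-1/2)) \<longlonglongrightarrow> 0"
    by (intro tendsto_mult_right_zero tendsto_neg_powr filterlim_real_sequentially) simp
qed (rule det2_fin_close)

end

section \<open>The matrix of \<open>K(\<sigma>,\<lambda>)\<close>\<close>

lemma norm_multiplier_sq_le:
  fixes x :: real and A1 A0 :: complex
  defines "\<xi> \<equiv> complex_of_real x"
  shows "(cmod (- ((\<i> * \<xi>) / (1 + \<xi>\<^sup>2)) * A1 - (1 / (1 + \<xi>\<^sup>2)) * A0))^2
           \<le> 2 / (1 + x^2) * ((cmod A1)^2 + (cmod A0)^2)"
proof -
  define D a b where "D = 1 + x^2" and "a = \<bar>x\<bar> / D" and "b = 1 / D"
  have D: "D \<ge> 1" "1 + \<xi>\<^sup>2 = complex_of_real D" unfolding D_def \<xi>_def by simp_all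
  have "cmod (- ((\<i> * \<xi>) / (1 + \<xi>\<^sup>2)) * A1 - (1 / (1 + \<xi>\<^sup>2)) * A0) \<le> a * cmod A1 + b * cmod A0"
    using D norm_triangle_ineq4[of "- ((\<i> * \<xi>) / (1 + \<xi>\<^sup>2)) * A1" "(1 / (1 + \<xi>\<^sup>2)) * A0"]
    by (simp add: norm_mult norm_divide \<xi>_def a_def b_def)
  then have "(cmod (- ((\<i> * \<xi>) / (1 + \<xi>\<^sup>2)) * A1 - (1 / (1 + \<xi>\<^sup>2)) * A0))^2 \<le> (a * cmod A1 + b * cmod A0)^2"
    by (rule power_mono) simp
  also have "\<dots> \<le> 2 * (a^2 * (cmod A1)^2 + b^2 * (cmod A0)^2)"
    using power2_add_le[of "a * cmod A1" "b * cmod A0"] by (simp only: power_mult_distrib)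
  also have "\<dots> \<le> 2 * (1 / D * (cmod A1)^2 + 1 / D * (cmod A0)^2)"
  proof -
    have "a^2 = x^2 / D^2" by (simp add: a_def power_divide)
    also have "\<dots> \<le> D / D^2" using D by (intro divide_right_mono) (auto simp: D_def)
    also have "\<dots> = 1 / D" using D by (simp add: power2_eq_square)
    finally have "a^2 \<le> 1 / D" .
    moreover have "b^2 \<le> 1 / D" using D mult_left_le[of b b] by (simp add: b_def power2_eq_square)
    ultimately show ?thesis by (intro mult_left_mono add_mono mult_right_mono) auto
  qed
  finally show ?thesis by (simp add: D_def algebra_simps add_divide_distrib)
qed

lemma power2_add3_le: "(x + y + z)^2 \<le> 3 * (x^2 + y^2 + z^2 :: real)"
proof -
  have "0 \<le> (x - y)^2 + (y - z)^2 + (x - z)^2" by simp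
  then show ?thesis by (simp add: power2_eq_square algebra_simps)
qed

lemma norm_Kmat_coefficients_sq_le:
  fixes b0 b1 lam dl :: complex and \<sigma> R :: real
  assumes dl: "dl = 0 \<or> dl = 1" and lam: "cmod lam \<le> R" and \<sigma>: "\<bar>\<sigma>\<bar> \<le> 8"
  shows "(cmod (b1 + 2 * \<i> * complex_of_real \<sigma> * dl))^2 +
         (cmod (b0 - (complex_of_real \<sigma>)^2 * dl + \<i> * complex_of_real \<sigma> * b1 + (1 - lam) * dl))^2
      \<le> (600 + 3 * (65 + R)^2) * ((cmod b0)^2 + (cmod b1)^2 + cmod dl)"
proof -
  define d u v where "d = cmod dl" and "u = cmod b0" and "v = cmod b1"
  have d: "d = 0 \<or> d = 1" using dl by (auto simp: d_def)
  have R: "R \<ge> 0" using lam norm_ge_zero order.trans by blast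
  have "\<sigma>^2 \<le> 8^2" using \<sigma> by (metis abs_le_square_iff abs_numeral)
  have d2: "d^2 = d" using d by auto
  have "cmod (b1 + 2 * \<i> * complex_of_real \<sigma> * dl) \<le> v + 2 * \<bar>\<sigma>\<bar> * d"
    using norm_triangle_ineq[of b1 "2 * \<i> * complex_of_real \<sigma> * dl"] by (simp add: v_def d_def norm_mult)
  also have "\<dots> \<le> v + 16 * d" using \<sigma> d by auto
  finally have "(cmod (b1 + 2 * \<i> * complex_of_real \<sigma> * dl))^2 \<le> (v + 16 * d)^2"
    by (rule power_mono) simp
  also have "\<dots> \<le> 2 * (v^2 + 256 * d)"
    using power2_add_le[of v "16 * d"] d2 by (simp add: power_mult_distrib)
  finally have A1: "(cmod (b1 + 2 * \<i> * complex_of_real \<sigma> * dl))^2 \<le> 2 * (v^2 + 256 * d)" .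
  have "cmod (b0 - (complex_of_real \<sigma>)^2 * dl + \<i> * complex_of_real \<sigma> * b1 + (1 - lam) * dl)
        \<le> cmod b0 + cmod ((complex_of_real \<sigma>)^2 * dl) + cmod (\<i> * complex_of_real \<sigma> * b1) + cmod ((1 - lam) * dl)"
    by (smt (verit) norm_triangle_ineq norm_triangle_ineq4)
  also have "\<dots> = u + \<sigma>^2 * d + \<bar>\<sigma>\<bar> * v + cmod (1 - lam) * d"
    by (simp add: u_def v_def d_def norm_mult norm_power)
  also have "\<dots> \<le> u + 8 * v + (65 + R) * d"
  proof -
    have "\<sigma>^2 * d \<le> 64 * d" using \<open>\<sigma>^2 \<le> 8^2\<close> d by auto
    moreover have "\<bar>\<sigma>\<bar> * v \<le> 8 * v" using \<sigma> by (simp add: v_def mult_right_mono)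
    moreover have "cmod (1 - lam) * d \<le> (1 + R) * d"
      using norm_triangle_ineq4[of 1 lam] lam d by auto
    ultimately show ?thesis unfolding distrib_right mult_1 by linarith
  qed
  finally have "(cmod (b0 - (complex_of_real \<sigma>)^2 * dl + \<i> * complex_of_real \<sigma> * b1 + (1 - lam) * dl))^2
      \<le> (u + 8 * v + (65 + R) * d)^2"
    by (rule power_mono) simp
  also have "\<dots> \<le> 3 * (u^2 + 64 * v^2 + (65 + R)^2 * d)"
    using power2_add3_le[of u "8 * v" "(65 + R) * d"] d2 by (simp add: power_mult_distrib)
  finally have A0: "(cmod (b0 - (complex_of_real \<sigma>)^2 * dl + \<i> * complex_of_real \<sigma> * b1 + (1 - lam) * dl))^2
      \<le> 3 * (u^2 + 64 * v^2 + (65 + R)^2 * d)" .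
  have "2 * (v^2 + 256 * d) + 3 * (u^2 + 64 * v^2 + (65 + R)^2 * d) \<le> (600 + 3 * (65 + R)^2) * (u^2 + v^2 + d)"
    using d by (auto simp: algebra_simps)
  then show ?thesis using A1 A0 by (simp add: u_def v_def d_def)
qed

lemma inverse_one_plus_freq_sq_le:
  assumes X: "X > 0"
  shows "1 / (1 + (freq X k)^2) \<le> (1 + X^2) / (1 + (real_of_int k)^2)"
proof -
  have "1 \<le> (2 * pi)^2" using pi_gt3 by (intro one_le_power) simp
  then have k: "(real_of_int k)^2 \<le> (2 * pi)^2 * (real_of_int k)^2" by (simp add: mult_le_cancel_right1)
  have "(real_of_int k)^2 = X^2 * (real_of_int k)^2 / X^2" using X by simp
  also have "\<dots> \<le> (1 + X^2) * ((2 * pi)^2 * (real_of_int k)^2) / X^2"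
    using k by (intro divide_right_mono mult_mono) auto
  also have "\<dots> = (1 + X^2) * (freq X k)^2"
    by (simp add: freq_def power_divide power_mult_distrib)
  finally have "(real_of_int k)^2 \<le> (1 + X^2) * (freq X k)^2" .
  moreover have "(1 + X^2) * (1 + (freq X k)^2) = 1 + X^2 + (1 + X^2) * (freq X k)^2"
    by (simp add: algebra_simps)
  ultimately have "1 + (real_of_int k)^2 \<le> (1 + X^2) * (1 + (freq X k)^2)"
    using zero_le_power2[of X] by linarith
  then show ?thesis by (simp add: field_simps add_pos_nonneg)
qed

lemma Kmat_entry_sq_le:
  fixes a0 a1 :: "real \<Rightarrow> complex^'n::finite^'n"
  assumes X: "X > 0" and lam: "cmod lam \<le> R" and \<sigma>: "\<bar>\<sigma>\<bar> \<le> 8"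
  shows "(cmod (Kmat X a0 a1 \<sigma> lam (k, i) (m, j)))^2 \<le>
     2 * (1 + X^2) * (600 + 3 * (65 + R)^2) / (1 + (real_of_int k)^2) *
     ((cmod (fcoef X (\<lambda>x. a0 x $ i $ j) (k - m)))^2 + (cmod (fcoef X (\<lambda>x. a1 x $ i $ j) (k - m)))^2
      + (if k = m \<and> i = j then 1 else 0))"
proof -
  define dl :: complex where "dl = (if k = m \<and> i = j then 1 else 0)"
  define b0 where "b0 = fcoef X (\<lambda>x. a0 x $ i $ j) (k - m)"
  define b1 where "b1 = fcoef X (\<lambda>x. a1 x $ i $ j) (k - m)"
  define E where "E = 600 + 3 * (65 + R)^2"
  have E: "E \<ge> 0" unfolding E_def by (simp add: add_nonneg_nonneg)
  have dl_norm: "cmod dl = (if k = m \<and> i = j then 1 else 0)" by (simp add: dl_def)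
  have "(cmod (Kmat X a0 a1 \<sigma> lam (k, i) (m, j)))^2 \<le> 2 / (1 + (freq X k)^2) *
      ((cmod (b1 + 2 * \<i> * complex_of_real \<sigma> * dl))^2 +
       (cmod (b0 - (complex_of_real \<sigma>)^2 * dl + \<i> * complex_of_real \<sigma> * b1 + (1 - lam) * dl))^2)"
    unfolding Kmat_def Let_def dl_def b0_def b1_def prod.case by (rule norm_multiplier_sq_le)
  also have "\<dots> \<le> 2 / (1 + (freq X k)^2) * (E * ((cmod b0)^2 + (cmod b1)^2 + cmod dl))"
    unfolding E_def by (intro mult_left_mono norm_Kmat_coefficients_sq_le) (auto simp: dl_def lam \<sigma>)
  also have "\<dots> \<le> 2 * ((1 + X^2) / (1 + (real_of_int k)^2)) * (E * ((cmod b0)^2 + (cmod b1)^2 + cmod dl))"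
  proof (rule mult_right_mono)
    have "2 / (1 + (freq X k)^2) = 2 * (1 / (1 + (freq X k)^2))" by simp
    then show "2 / (1 + (freq X k)^2) \<le> 2 * ((1 + X^2) / (1 + (real_of_int k)^2))"
      using inverse_one_plus_freq_sq_le[OF X, of k] by linarith
  qed (use E in auto)
  also have "\<dots> = 2 * (1 + X^2) * E / (1 + (real_of_int k)^2) * ((cmod b0)^2 + (cmod b1)^2 + cmod dl)"
    by (simp add: algebra_simps)
  finally show ?thesis by (simp only: E_def b0_def b1_def dl_norm)
qed

definition fourier_weight ::
    "real \<Rightarrow> (real \<Rightarrow> complex^'n^'n) \<Rightarrow> (real \<Rightarrow> complex^'n^'n) \<Rightarrow> 'n \<Rightarrow> 'n \<Rightarrow> int \<Rightarrow> real" where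
  "fourier_weight X a0 a1 i j l =
     (cmod (fcoef X (\<lambda>x. a0 x $ i $ j) l))^2 + (cmod (fcoef X (\<lambda>x. a1 x $ i $ j) l))^2"

lemma H1per_weighted_summable:
  "H1per X a \<Longrightarrow> (\<lambda>l. (1 + (real_of_int l)^2) * (cmod (fcoef X (\<lambda>x. a x $ i $ j) l))^2) summable_on UNIV"
  unfolding H1per_def H1per_scalar_def by blast

lemma sobolev_kernel_Kmat:
  fixes a0 a1 :: "real \<Rightarrow> complex^'n::finite^'n"
  assumes X: "X > 0" and a: "H1per X a0" "H1per X a1" and lam: "cmod lam \<le> R" and \<sigma>: "\<bar>\<sigma>\<bar> \<le> 8"
  shows "sobolev_kernel (Kmat X a0 a1 \<sigma> lam) (fourier_weight X a0 a1) (2 * (1 + X^2) * (600 + 3 * (65 + R)^2))"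
proof
  show "(\<lambda>l. (1 + (real_of_int l)^2) * fourier_weight X a0 a1 i j l) summable_on UNIV" for i j
    unfolding fourier_weight_def distrib_left
    using H1per_weighted_summable[OF a(1)] H1per_weighted_summable[OF a(2)] by (rule summable_on_add)
  show "(cmod (Kmat X a0 a1 \<sigma> lam (k, i) (m, j)))^2 \<le> 2 * (1 + X^2) * (600 + 3 * (65 + R)^2) /
      (1 + (real_of_int k)^2) * (fourier_weight X a0 a1 i j (k - m) + (if k = m \<and> i = j then 1 else 0))"
    for k i m j
    unfolding fourier_weight_def by (rule Kmat_entry_sq_le[OF X lam \<sigma>])
qed (auto simp: fourier_weight_def add_nonneg_nonneg)

theorem theorem3p10:
  fixes X :: real and a0 a1 :: "real \<Rightarrow> complex^'n^'n"
  assumes "X > 0" and "H1per X a0" and "H1per X a1"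
  shows "\<forall>R>0. \<exists>C>0. \<forall>J::nat. \<forall>lam::complex. \<forall>\<sigma>::real.
           J \<ge> 1 \<and> cmod lam \<le> R \<and> 0 \<le> \<sigma> \<and> \<sigma> < 2 * pi \<longrightarrow>
           cmod (det2_fin (trunc_idx J) (Kmat X a0 a1 \<sigma> lam) - det2 UNIV (Kmat X a0 a1 \<sigma> lam))
             \<le> C * real J powr (-1/2)"
proof (intro allI impI)
  fix R :: real
  define C0 where "C0 = 2 * (1 + X^2) * (600 + 3 * (65 + R)^2)"
  define C where "C = \<bar>det2_trunc_constant (fourier_weight X a0 a1) C0\<bar> + 1"
  show "\<exists>C>0. \<forall>J lam \<sigma>. J \<ge> 1 \<and> cmod lam \<le> R \<and> 0 \<le> \<sigma> \<and> \<sigma> < 2 * pi \<longrightarrow>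
      cmod (det2_fin (trunc_idx J) (Kmat X a0 a1 \<sigma> lam) - det2 UNIV (Kmat X a0 a1 \<sigma> lam)) \<le> C * real J powr (-1/2)"
  proof (intro exI[of _ C] conjI allI impI)
    fix J :: nat and lam :: complex and \<sigma> :: real
    assume H: "J \<ge> 1 \<and> cmod lam \<le> R \<and> 0 \<le> \<sigma> \<and> \<sigma> < 2 * pi"
    then have "\<bar>\<sigma>\<bar> \<le> 8" using pi_less_4 by linarith
    then have "sobolev_kernel (Kmat X a0 a1 \<sigma> lam) (fourier_weight X a0 a1) C0"
      unfolding C0_def using assms H by (intro sobolev_kernel_Kmat) auto
    then have "cmod (det2_fin (trunc_idx J) (Kmat X a0 a1 \<sigma> lam) - det2 UNIV (Kmat X a0 a1 \<sigma> lam))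
               \<le> det2_trunc_constant (fourier_weight X a0 a1) C0 * real J powr (-1/2)"
      using H by (intro sobolev_kernel.det2_trunc_error) auto
    also have "\<dots> \<le> C * real J powr (-1/2)" by (intro mult_right_mono) (auto simp: C_def)
    finally show "cmod (det2_fin (trunc_idx J) (Kmat X a0 a1 \<sigma> lam) - det2 UNIV (Kmat X a0 a1 \<sigma> lam))
                  \<le> C * real J powr (-1/2)" .
  qed (simp add: C_def)
qed

end
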